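(* Let $k$ be a positive integer and let $p$ be the smallest positive integer such that $k<\kappa_p$ (in dimension $d=2$). If $p$ is a multiple of $4$ and $k-\kappa_{p-1}$ is an odd multiple of $p/2$, then $\delta_z(2,k)\neq\lfloor\lambda(2,k)\rfloor$.
   Context: A point of $\mathbb{Z}^2$ is primitive if its coordinates are relatively prime; $\mathbb{P}^2_\circ$ denotes the set of primitive points of $\mathbb{Z}^2$ whose first non-zero coordinate is positive. For a finite $\mathcal{X}\subset\mathbb{R}^2$, $\kappa(\mathcal{X})=\max_{i\in\{1,2\}}\sum_{x\in\mathcal{X}}|x_i|$, and $\delta_z(2,k)=\max\{|\mathcal{X}|:\mathcal{X}\subset\mathbb{P}^2_\circ,\ \kappa(\mathcal{X})\le k\}$. $B(2,p)=\{x\in\mathbb{R}^2:\|x\|_1\le p\}$; $N_p=|B(2,p)\cap\mathbb{P}^2_\circ|$ and $\kappa_p=\kappa(B(2,p)\cap\mathbb{P}^2_\circ)$ (with $N_0=\kappa_0=0$). With $p$ as in the claim, $\lambda(2,k)=N_{p-1}+\frac{2(k-\kappa_{p-1})}{p}$. *)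

theory Defs
  imports Complex_Main
begin

definition prim_pos :: "(int \<times> int) set" where
  "prim_pos = {(a, b). gcd a b = 1 \<and> (a > 0 \<or> (a = 0 \<and> b > 0))}"

definition kappa :: "(int \<times> int) set \<Rightarrow> int" where
  "kappa X = max (\<Sum>x\<in>X. \<bar>fst x\<bar>) (\<Sum>x\<in>X. \<bar>snd x\<bar>)"

definition delta_z2 :: "nat \<Rightarrow> nat" where
  "delta_z2 k = Max {card X | X. X \<subseteq> prim_pos \<and> finite X \<and> kappa X \<le> int k}"

definition ball1 :: "nat \<Rightarrow> (int \<times> int) set" where
  "ball1 p = {x. \<bar>fst x\<bar> + \<bar>snd x\<bar> \<le> int p}"

definition N_p :: "nat \<Rightarrow> nat" where
  "N_p p = card (ball1 p \<inter> prim_pos)"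

definition kappa_p :: "nat \<Rightarrow> int" where
  "kappa_p p = kappa (ball1 p \<inter> prim_pos)"

definition p_of :: "nat \<Rightarrow> nat" where
  "p_of k = (LEAST p. 0 < p \<and> int k < kappa_p p)"

definition lambda2 :: "nat \<Rightarrow> real" where
  "lambda2 k = (let p = p_of k in
     real (N_p (p - 1)) + 2 * real_of_int (int k - kappa_p (p - 1)) / real p)"

end

theory Submission
  imports Defs
begin

text \<open>
  Put \<open>P = p_of k\<close>, let \<open>B\<close> be the primitive points of l1-norm at most \<open>P - 1\<close>
  and write \<open>k = \<kappa>\<^sub>P\<^sub>-\<^sub>1 + m P/2\<close> with \<open>m\<close> odd, so that \<open>\<lambda>(2,k) = |B| + m\<close>
  is an integer. By the symmetry \<open>(a,b) \<mapsto> (b,a)\<close> the norms over \<open>B\<close> add up to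
  \<open>2\<kappa>\<^sub>P\<^sub>-\<^sub>1\<close>, while an admissible set \<open>X\<close> (one with \<open>\<kappa>(X) \<le> k\<close>) of size
  \<open>|B| + m\<close> has norm sum at most \<open>2k = 2\<kappa>\<^sub>P\<^sub>-\<^sub>1 + mP\<close>. Points outside \<open>B\<close>
  have norm at least \<open>P\<close> and points of \<open>B\<close> norm below \<open>P\<close>, so this is only possible
  if \<open>B \<subseteq> X\<close>, every point of \<open>X - B\<close> has norm exactly \<open>P\<close>, and both coordinate
  sums of \<open>X\<close> equal \<open>k\<close>. A primitive point of even norm has odd coordinates, so
  the first coordinates over \<open>X - B\<close> are \<open>m\<close> odd numbers whose sum \<open>mP/2\<close> is even
  because \<open>4\<close> divides \<open>P\<close>: a parity contradiction.
\<close>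

definition norm1 :: "int \<times> int \<Rightarrow> int" where
  "norm1 x = \<bar>fst x\<bar> + \<bar>snd x\<bar>"

lemma ball1_eq: "ball1 p = {x. norm1 x \<le> int p}"
  by (simp add: ball1_def norm1_def)

lemma sum_norm1: "sum norm1 X = (\<Sum>x\<in>X. \<bar>fst x\<bar>) + (\<Sum>x\<in>X. \<bar>snd x\<bar>)"
  by (simp add: norm1_def sum.distrib)

lemma norm1_prim_pos_ge_1: "x \<in> prim_pos \<Longrightarrow> 1 \<le> norm1 x"
  by (cases x) (auto simp: prim_pos_def norm1_def)

lemma kappa_p_0: "kappa_p 0 = 0"
proof -
  have "ball1 0 \<inter> prim_pos = {}"
    using norm1_prim_pos_ge_1 by (fastforce simp: ball1_eq)
  then show ?thesis
    by (simp add: kappa_p_def kappa_def)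
qed

lemma finite_ball1: "finite (ball1 p)"
proof (rule finite_subset)
  show "ball1 p \<subseteq> {- int p..int p} \<times> {- int p..int p}"
    by (auto simp: ball1_def)
qed simp

text \<open>The signs are chosen so that the image lies in \<open>prim_pos\<close> again;
  \<open>(1,0)\<close> and \<open>(0,1)\<close> are exchanged.\<close>
definition prim_swap :: "int \<times> int \<Rightarrow> int \<times> int" where
  "prim_swap x = (if snd x > 0 then (snd x, fst x)
     else if snd x < 0 then (- snd x, - fst x) else (0, \<bar>fst x\<bar>))"

lemma prim_swap_prim_swap: "x \<in> prim_pos \<Longrightarrow> prim_swap (prim_swap x) = x"
  by (cases x) (auto simp: prim_swap_def prim_pos_def)

lemma abs_fst_prim_swap: "x \<in> prim_pos \<Longrightarrow> \<bar>fst (prim_swap x)\<bar> = \<bar>snd x\<bar>"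
  by (cases x) (auto simp: prim_swap_def prim_pos_def)

lemma norm1_prim_swap: "x \<in> prim_pos \<Longrightarrow> norm1 (prim_swap x) = norm1 x"
  by (cases x) (auto simp: prim_swap_def prim_pos_def norm1_def)

lemma prim_swap_prim_pos:
  assumes "x \<in> prim_pos"
  shows "prim_swap x \<in> prim_pos"
proof (cases x)
  case (Pair a b)
  with assms have "gcd a b = 1" "a > 0 \<or> (a = 0 \<and> b > 0)"
    by (auto simp: prim_pos_def)
  moreover from calculation have "b = 0 \<Longrightarrow> a = 1"
    by auto
  ultimately show ?thesis
    using Pair by (auto simp: prim_swap_def prim_pos_def gcd.commute)
qed

lemma sum_abs_snd_ball1_prim_pos:
  "(\<Sum>x\<in>ball1 p \<inter> prim_pos. \<bar>snd x\<bar>) = (\<Sum>x\<in>ball1 p \<inter> prim_pos. \<bar>fst x\<bar>)"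
  by (rule sum.reindex_bij_witness[where i = prim_swap and j = prim_swap])
     (simp_all add: prim_swap_prim_swap abs_fst_prim_swap prim_swap_prim_pos norm1_prim_swap ball1_eq)

lemma kappa_p_eq_sum_abs_fst: "kappa_p p = (\<Sum>x\<in>ball1 p \<inter> prim_pos. \<bar>fst x\<bar>)"
  by (simp add: kappa_p_def kappa_def sum_abs_snd_ball1_prim_pos)

lemma sum_norm1_ball1_prim_pos: "sum norm1 (ball1 p \<inter> prim_pos) = 2 * kappa_p p"
  by (simp add: sum_norm1 sum_abs_snd_ball1_prim_pos kappa_p_eq_sum_abs_fst)

lemma sum_exchange:
  fixes f :: "'a \<Rightarrow> int"
  assumes "finite X" "finite B"
  shows "sum f X = sum f B + c * (int (card X) - int (card B))
    + (\<Sum>x\<in>X - B. f x - c) + (\<Sum>x\<in>B - X. c - f x)"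
proof -
  have "sum f X = sum f (X \<inter> B) + sum f (X - B)" "card X = card (X \<inter> B) + card (X - B)"
    using assms(1) by (rule sum.Int_Diff, rule card_Int_Diff)
  moreover have "sum f B = sum f (X \<inter> B) + sum f (B - X)" "card B = card (X \<inter> B) + card (B - X)"
    using assms(2) by (simp_all add: sum.Int_Diff[of B _ X] card_Int_Diff[of B X] Int_commute)
  ultimately show ?thesis
    by (simp add: sum_subtractf algebra_simps)
qed

lemma sum_le_exchange_imp:
  fixes f :: "'a \<Rightarrow> int"
  assumes "finite X" "finite B"
    and outside: "\<And>x. x \<in> X - B \<Longrightarrow> c \<le> f x"
    and inside: "\<And>x. x \<in> B - X \<Longrightarrow> f x < c"
    and le: "sum f X \<le> sum f B + c * (int (card X) - int (card B))"
  shows "B \<subseteq> X" and "\<And>x. x \<in> X - B \<Longrightarrow> f x = c"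
proof -
  have nonneg: "0 \<le> (\<Sum>x\<in>X - B. f x - c)" "0 \<le> (\<Sum>x\<in>B - X. c - f x)"
    using outside inside by (auto intro: sum_nonneg simp: less_imp_le)
  with le sum_exchange[OF assms(1,2), of f c]
  have zero: "(\<Sum>x\<in>X - B. f x - c) = 0" "(\<Sum>x\<in>B - X. c - f x) = 0"
    by linarith+
  have "B - X = {}"
    using zero(2) inside sum_nonneg_eq_0_iff[of "B - X" "\<lambda>x. c - f x"] assms(2)
    by (fastforce simp: less_imp_le)
  then show "B \<subseteq> X" by blast
  show "f x = c" if "x \<in> X - B" for x
    using zero(1) outside sum_nonneg_eq_0_iff[of "X - B" "\<lambda>x. f x - c"] assms(1) that
    by fastforce
qed

lemma odd_if_coprime_even_abs_add:
  fixes a b :: int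
  assumes "coprime a b" "even (\<bar>a\<bar> + \<bar>b\<bar>)"
  shows "odd a"
proof
  assume "even a"
  with assms(2) have "even b" by simp
  with \<open>even a\<close> assms(1) show False
    by (metis coprime_common_divisor odd_one)
qed

lemma even_sum_odd_iff:
  fixes f :: "'a \<Rightarrow> 'b::semiring_parity"
  assumes "finite C" "\<And>x. x \<in> C \<Longrightarrow> odd (f x)"
  shows "even (sum f C) \<longleftrightarrow> even (card C)"
proof -
  have "{x \<in> C. odd (f x)} = C"
    using assms(2) by blast
  with assms(1) show ?thesis
    by (simp add: even_sum_iff)
qed

lemma card_le_twice_kappa:
  assumes "finite X" "X \<subseteq> prim_pos"
  shows "int (card X) \<le> 2 * kappa X"
proof -
  have "int (card X) = (\<Sum>x\<in>X. 1)" by simp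
  also have "\<dots> \<le> sum norm1 X"
    using assms norm1_prim_pos_ge_1 by (intro sum_mono) auto
  also have "\<dots> \<le> 2 * kappa X"
    by (simp add: sum_norm1 kappa_def)
  finally show ?thesis .
qed

lemma delta_z2_attained:
  obtains X where "X \<subseteq> prim_pos" "finite X" "kappa X \<le> int k" "card X = delta_z2 k"
proof -
  define S where "S = {card X | X. X \<subseteq> prim_pos \<and> finite X \<and> kappa X \<le> int k}"
  have "card X \<le> 2 * k" if "X \<subseteq> prim_pos" "finite X" "kappa X \<le> int k" for X
    using card_le_twice_kappa[OF that(2,1)] that(3) by linarith
  then have "S \<subseteq> {..2 * k}"
    unfolding S_def by auto
  then have "finite S" by (rule finite_subset) simp
  moreover have "card {} \<in> S"
    unfolding S_def kappa_def by force
  ultimately have "delta_z2 k \<in> S"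
    unfolding delta_z2_def S_def[symmetric] by (intro Max_in) auto
  then show thesis
    using that unfolding S_def by auto
qed

lemma admissible_set_extends_ball1:
  fixes P :: nat and m :: int
  defines "B \<equiv> ball1 (P - 1) \<inter> prim_pos"
  assumes "0 < P" and X: "X \<subseteq> prim_pos" "finite X"
    and kappa_X: "2 * kappa X \<le> 2 * kappa_p (P - 1) + m * int P"
    and card_X: "int (card X) = int (N_p (P - 1)) + m"
  shows "B \<subseteq> X" and "\<And>x. x \<in> X - B \<Longrightarrow> norm1 x = int P"
    and "2 * (\<Sum>x\<in>X. \<bar>fst x\<bar>) = 2 * kappa_p (P - 1) + m * int P"
proof -
  have "finite B"
    by (simp add: B_def finite_ball1)
  have sums_X: "2 * (\<Sum>x\<in>X. \<bar>fst x\<bar>) \<le> 2 * kappa_p (P - 1) + m * int P"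
    "2 * (\<Sum>x\<in>X. \<bar>snd x\<bar>) \<le> 2 * kappa_p (P - 1) + m * int P"
    using kappa_X by (simp_all add: kappa_def)
  have norm_B: "sum norm1 B = 2 * kappa_p (P - 1)"
    by (simp add: B_def sum_norm1_ball1_prim_pos)
  have card_diff: "int (card X) - int (card B) = m"
    using card_X by (simp add: B_def N_p_def)
  have "sum norm1 X \<le> sum norm1 B + int P * (int (card X) - int (card B))"
    using sums_X norm_B card_diff unfolding sum_norm1 by (simp add: algebra_simps)
  moreover have "int P \<le> norm1 x" if "x \<in> X - B" for x
  proof -
    have "x \<notin> ball1 (P - 1)"
      using that X(1) by (auto simp: B_def)
    with \<open>0 < P\<close> show ?thesis
      by (simp add: ball1_eq)
  qed
  moreover have "norm1 x < int P" if "x \<in> B - X" for x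
    using that \<open>0 < P\<close> by (simp add: B_def ball1_eq)
  ultimately show "B \<subseteq> X" and norm_P: "\<And>x. x \<in> X - B \<Longrightarrow> norm1 x = int P"
    using sum_le_exchange_imp[OF \<open>finite X\<close> \<open>finite B\<close>] by blast+
  then have B_X: "B - X = {}"
    by blast
  from norm_P card_diff have "sum norm1 X = sum norm1 B + int P * m"
    using sum_exchange[OF \<open>finite X\<close> \<open>finite B\<close>, of norm1 "int P"] by (simp add: B_X)
  with sums_X norm_B show "2 * (\<Sum>x\<in>X. \<bar>fst x\<bar>) = 2 * kappa_p (P - 1) + m * int P"
    unfolding sum_norm1 by (simp add: algebra_simps)
qed

lemma no_admissible_set:
  fixes m :: int
  assumes "4 dvd P" "0 < P" "odd m"
    and X: "X \<subseteq> prim_pos" "finite X"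
    and kappa_X: "2 * kappa X \<le> 2 * kappa_p (P - 1) + m * int P"
    and card_X: "int (card X) = int (N_p (P - 1)) + m"
  shows False
proof -
  define B where "B = ball1 (P - 1) \<inter> prim_pos"
  note extends = admissible_set_extends_ball1[OF \<open>0 < P\<close> X kappa_X card_X, folded B_def]
  have "finite B"
    by (simp add: B_def finite_ball1)
  have card_outside: "int (card (X - B)) = m"
    using card_X card_Diff_subset[OF \<open>finite B\<close> extends(1)] card_mono[OF \<open>finite X\<close> extends(1)]
    by (simp add: of_nat_diff B_def N_p_def)
  have "(\<Sum>x\<in>X. \<bar>fst x\<bar>) = kappa_p (P - 1) + (\<Sum>x\<in>X - B. \<bar>fst x\<bar>)"
    using sum.subset_diff[OF extends(1) \<open>finite X\<close>, of "\<lambda>x. \<bar>fst x\<bar>"]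
    by (simp add: B_def kappa_p_eq_sum_abs_fst)
  with extends(3) have "2 * (\<Sum>x\<in>X - B. \<bar>fst x\<bar>) = m * int P"
    by simp
  with \<open>4 dvd P\<close> have "even (\<Sum>x\<in>X - B. \<bar>fst x\<bar>)"
    by (auto elim!: dvdE)
  moreover have "odd \<bar>fst x\<bar>" if "x \<in> X - B" for x
  proof -
    from that X have "coprime (fst x) (snd x)"
      by (auto simp: prim_pos_def coprime_iff_gcd_eq_1)
    moreover have "even (\<bar>fst x\<bar> + \<bar>snd x\<bar>)"
      using extends(2)[OF that] \<open>4 dvd P\<close> by (auto simp: norm1_def elim!: dvdE)
    ultimately have "odd (fst x)"
      by (rule odd_if_coprime_even_abs_add)
    then show ?thesis
      by simp
  qed
  ultimately have "even (card (X - B))"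
    using even_sum_odd_iff[of "X - B" "\<lambda>x. \<bar>fst x\<bar>"] \<open>finite X\<close> by blast
  with card_outside \<open>odd m\<close> show False
    by (metis even_of_nat)
qed

lemma lambda2_eq:
  fixes m :: int
  assumes "0 < p_of k" "even (p_of k)"
    and "int k - kappa_p (p_of k - 1) = m * (int (p_of k) div 2)"
  shows "lambda2 k = real (N_p (p_of k - 1)) + real_of_int m"
proof -
  from assms(2) obtain q where q: "p_of k = 2 * q"
    by (elim evenE)
  with assms(3) have "int k - kappa_p (p_of k - 1) = m * int q"
    by simp
  then have "real_of_int (int k - kappa_p (p_of k - 1)) = real_of_int m * real q"
    by (metis of_int_mult of_int_of_nat_eq)
  moreover have "real q \<noteq> 0"
    using assms(1) q by simp
  ultimately have "2 * real_of_int (int k - kappa_p (p_of k - 1)) / real (p_of k) = real_of_int m"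
    using q by simp
  then show ?thesis
    by (simp add: lambda2_def Let_def)
qed

theorem lemma3p3:
  fixes k :: nat
  assumes "0 < k"
    and "4 dvd p_of k"
    and "\<exists>m::int. odd m \<and> int k - kappa_p (p_of k - 1) = m * (int (p_of k) div 2)"
  shows "int (delta_z2 k) \<noteq> \<lfloor>lambda2 k\<rfloor>"
proof
  assume delta_eq: "int (delta_z2 k) = \<lfloor>lambda2 k\<rfloor>"
  obtain m :: int where "odd m" and k_eq: "int k - kappa_p (p_of k - 1) = m * (int (p_of k) div 2)"
    using assms(3) by blast
  have "0 < p_of k"
    using k_eq \<open>0 < k\<close> kappa_p_0 by (cases "p_of k") auto
  have "2 * int k = 2 * kappa_p (p_of k - 1) + m * int (p_of k)"
    using k_eq \<open>4 dvd p_of k\<close> by (auto elim!: dvdE)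
  have "lambda2 k = real (N_p (p_of k - 1)) + real_of_int m"
    using \<open>0 < p_of k\<close> \<open>4 dvd p_of k\<close> k_eq by (intro lambda2_eq) auto
  with delta_eq have card_eq: "int (delta_z2 k) = int (N_p (p_of k - 1)) + m"
    by simp
  obtain X where X: "X \<subseteq> prim_pos" "finite X" "kappa X \<le> int k" and "card X = delta_z2 k"
    by (rule delta_z2_attained)
  with card_eq \<open>2 * int k = _\<close> show False
    using no_admissible_set[OF \<open>4 dvd p_of k\<close> \<open>0 < p_of k\<close> \<open>odd m\<close> X(1,2)] by simp
qed

end
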